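(* Let $m>n$ be integers, $\Lambda=I_m$, $\theta_*\in\mathbb{R}^m$, $\sigma^2\ge0$. Define the deterministic equivalents for the min-norm random features interpolator as follows. If $p>n$ (over-parameterized), with $\lambda_n$ solving $\operatorname{Tr}(\Lambda(\Lambda+\lambda_nI)^{-1})=n$: $\mathsf{B}_{\mathsf{N},0}=\frac{p\langle\theta_*,(\Lambda+\lambda_nI)^{-1}\theta_*\rangle}{p-n}$, $\mathsf{V}_{\mathsf{N},0}=\frac{\sigma^2p}{\lambda_n(p-n)}$, $\mathsf{B}_{\mathsf{R},0}=\frac{n\lambda_n^2\langle\theta_*,(\Lambda+\lambda_nI)^{-2}\theta_*\rangle}{n-\operatorname{Tr}(\Lambda^2(\Lambda+\lambda_nI)^{-2})}+\frac{n\lambda_n\langle\theta_*,(\Lambda+\lambda_nI)^{-1}\theta_*\rangle}{p-n}$, $\mathsf{V}_{\mathsf{R},0}=\frac{\sigma^2\operatorname{Tr}(\Lambda^2(\Lambda+\lambda_nI)^{-2})}{n-\operatorname{Tr}(\Lambda^2(\Lambda+\lambda_nI)^{-2})}+\frac{\sigma^2n}{p-n}$. If $p<n$ (under-parameterized), with $\lambda_p$ solving $\operatorname{Tr}(\Lambda(\Lambda+\lambda_pI)^{-1})=p$: $\mathsf{B}_{\mathsf{N},0}=\frac{p\langle\theta_*,\Lambda(\Lambda+\lambda_pI)^{-2}\theta_*\rangle}{n-\operatorname{Tr}(\Lambda^2(\Lambda+\lambda_pI)^{-2})}+\frac{p\langle\theta_*,(\Lambda+\lambda_pI)^{-1}\theta_*\rangle}{n-p}$,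 $\mathsf{V}_{\mathsf{N},0}=\frac{\sigma^2p}{\lambda_p(n-p)}$, $\mathsf{B}_{\mathsf{R},0}=\frac{n\lambda_p\langle\theta_*,(\Lambda+\lambda_pI)^{-1}\theta_*\rangle}{n-p}$, $\mathsf{V}_{\mathsf{R},0}=\frac{\sigma^2p}{n-p}$. Let $\mathsf{R}_0=\mathsf{B}_{\mathsf{R},0}+\mathsf{V}_{\mathsf{R},0}$ and $\mathsf{N}_0=\mathsf{B}_{\mathsf{N},0}+\mathsf{V}_{\mathsf{N},0}$. Then in the over-parameterized regime $p>n$, $$\mathsf{R}_0=\frac{m-n}{n}\mathsf{N}_0+\frac{2n-m}{m-n}\sigma^2,$$ and in the under-parameterized regime $p<n$, $$\big(\mathsf{V}_{\mathsf{R},0}\big)^2=\frac{m-n}{n}\mathsf{V}_{\mathsf{R},0}\mathsf{V}_{\mathsf{N},0}+\frac{m\sigma^2}{n}\mathsf{V}_{\mathsf{N},0},$$ $$(m-n)\mathsf{B}_{\mathsf{N},0}\big(m\mathsf{B}_{\mathsf{R},0}-n\|\theta_*\|_2^2\big)\big(m\mathsf{B}_{\mathsf{R},0}^2-n\|\theta_*\|_2^4\big)=nm\big(\mathsf{B}_{\mathsf{R},0}-\|\theta_*\|_2^2\big)^2\big[m\mathsf{B}_{\mathsf{R},0}^2+n\|\theta_*\|_2^2\mathsf{B}_{\mathsf{R},0}-2n\|\theta_*\|_2^4\big].$$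
   Context: These quantities are the deterministic equivalents of the bias/variance of the excess risk ($\mathsf{B}_{\mathsf{R},0},\mathsf{V}_{\mathsf{R},0}$) and of the squared $\ell_2$ norm ($\mathsf{B}_{\mathsf{N},0},\mathsf{V}_{\mathsf{N},0}$) of the minimum-norm random features interpolator with $n$ samples and $p$ features, feature spectrum $\Lambda$, target coefficients $\theta_*$ and noise variance $\sigma^2$; they are defined directly by the formulas in the claim, here with isotropic finite-rank spectrum $\Lambda=I_m$. *)

theory Defs
  imports "HOL-Analysis.Analysis"
begin

definition resolv :: "real^'m^'m \<Rightarrow> real \<Rightarrow> real^'m^'m" where
  "resolv L l = matrix_inv (L + mat l)"

definition lam_eff :: "real^'m^'m \<Rightarrow> nat \<Rightarrow> real" where
  "lam_eff L k = (THE l. l > 0 \<and> trace (L ** resolv L l) = real k)"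

definition df2 :: "real^'m^'m \<Rightarrow> real \<Rightarrow> real" where
  "df2 L l = trace (L ** L ** resolv L l ** resolv L l)"

definition BN0 :: "real^'m^'m \<Rightarrow> real^'m \<Rightarrow> nat \<Rightarrow> nat \<Rightarrow> real" where
  "BN0 L th n p =
    (if p > n then
       (let l = lam_eff L n in
         real p * (th \<bullet> (resolv L l *v th)) / (real p - real n))
     else
       (let l = lam_eff L p in
         real p * (th \<bullet> ((L ** resolv L l ** resolv L l) *v th)) / (real n - df2 L l)
         + real p * (th \<bullet> (resolv L l *v th)) / (real n - real p)))"

definition VN0 :: "real^'m^'m \<Rightarrow> real \<Rightarrow> nat \<Rightarrow> nat \<Rightarrow> real" where
  "VN0 L s2 n p =
    (if p > n then s2 * real p / (lam_eff L n * (real p - real n))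
     else s2 * real p / (lam_eff L p * (real n - real p)))"

definition BR0 :: "real^'m^'m \<Rightarrow> real^'m \<Rightarrow> nat \<Rightarrow> nat \<Rightarrow> real" where
  "BR0 L th n p =
    (if p > n then
       (let l = lam_eff L n in
         real n * l^2 * (th \<bullet> ((resolv L l ** resolv L l) *v th)) / (real n - df2 L l)
         + real n * l * (th \<bullet> (resolv L l *v th)) / (real p - real n))
     else
       (let l = lam_eff L p in
         real n * l * (th \<bullet> (resolv L l *v th)) / (real n - real p)))"

definition VR0 :: "real^'m^'m \<Rightarrow> real \<Rightarrow> nat \<Rightarrow> nat \<Rightarrow> real" where
  "VR0 L s2 n p =
    (if p > n then
       s2 * df2 L (lam_eff L n) / (real n - df2 L (lam_eff L n)) + s2 * real n / (real p - real n)
     else s2 * real p / (real n - real p))"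

definition R0 :: "real^'m^'m \<Rightarrow> real^'m \<Rightarrow> real \<Rightarrow> nat \<Rightarrow> nat \<Rightarrow> real" where
  "R0 L th s2 n p = BR0 L th n p + VR0 L s2 n p"

definition N0 :: "real^'m^'m \<Rightarrow> real^'m \<Rightarrow> real \<Rightarrow> nat \<Rightarrow> nat \<Rightarrow> real" where
  "N0 L th s2 n p = BN0 L th n p + VN0 L s2 n p"

end

theory Submission
  imports Defs
begin

text \<open>For \<open>\<Lambda> = I\<^sub>m\<close> every resolvent is a scalar matrix, so the fixed-point equation
  \<open>Tr((I + \<lambda> I)\<^sup>-\<^sup>1) = k\<close> gives \<open>1 + \<lambda>\<^sub>k = m / k\<close> and \<open>(I + \<lambda>\<^sub>k I)\<^sup>-\<^sup>1 = (k / m) I\<close>.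
  All deterministic equivalents thereby become explicit rational functions of \<open>m, n, p, \<sigma>\<^sup>2\<close>
  and \<open>\<parallel>\<theta>\<^sub>*\<parallel>\<^sup>2\<close>, and the claimed relations are identities between these functions. For the
  under-parameterized bias the crucial cancellation is that \<open>m B\<^sub>R\<^sup>2 - n \<parallel>\<theta>\<^sub>*\<parallel>\<^sup>4\<close> carries the factor
  \<open>n m - p\<^sup>2\<close>, which is exactly the denominator of \<open>B\<^sub>N\<close>.\<close>

lemma mat_add_mat: "mat a + mat b = (mat (a + b) :: 'a::monoid_add^'n^'n)"
  by (simp add: vec_eq_iff mat_def)

lemma if_zero_mult: "(if P then c else 0) * y = (if P then c * y else (0::'a::mult_zero))"
  by simp

lemma mat_mult_mat: "mat a ** mat b = (mat (a * b) :: 'a::semiring_1^'n^'n)"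
  by (simp add: matrix_matrix_mult_def mat_def vec_eq_iff if_zero_mult)

lemma mat_vector_mult: "(mat a :: 'a::semiring_1^'n^'n) *v x = a *s x"
  by (simp add: matrix_vector_mult_def mat_def vec_eq_iff if_zero_mult)

lemma trace_mat: "trace (mat a :: 'a::semiring_1^'n^'n) = of_nat CARD('n) * a"
  by (simp add: trace_def mat_def)

lemma inner_mat_vector_mult: "x \<bullet> (mat a *v x) = a * (norm x)\<^sup>2"
  for x :: "real^'n"
  by (simp add: mat_vector_mult power2_norm_eq_inner scalar_mult_eq_scaleR)

lemma matrix_inv_eqI:
  fixes A B :: "'a::semiring_1^'n^'n"
  assumes AB: "A ** B = mat 1" and BA: "B ** A = mat 1"
  shows "matrix_inv A = B"
  unfolding matrix_inv_def
proof (rule some_equality)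
  show "A ** B = mat 1 \<and> B ** A = mat 1" using AB BA ..
next
  fix C assume "A ** C = mat 1 \<and> C ** A = mat 1"
  then have "C = (B ** A) ** C" and "B = B ** (A ** C)" using BA by simp_all
  then show "C = B" by (simp add: matrix_mul_assoc)
qed

lemma matrix_inv_mat:
  assumes "a \<noteq> 0" shows "matrix_inv (mat a :: 'a::field^'n^'n) = mat (inverse a)"
proof (rule matrix_inv_eqI)
  show "mat a ** mat (inverse a) = (mat 1 :: 'a^'n^'n)" using assms by (simp add: mat_mult_mat)
  show "mat (inverse a) ** mat a = (mat 1 :: 'a^'n^'n)" using assms by (simp add: mat_mult_mat)
qed

lemma resolv_mat_1:
  "1 + l \<noteq> 0 \<Longrightarrow> resolv (mat 1 :: real^'n^'n) l = mat (inverse (1 + l))"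
  unfolding resolv_def mat_add_mat by (rule matrix_inv_mat)

lemma trace_resolv_mat_1:
  "1 + l \<noteq> 0 \<Longrightarrow> trace (resolv (mat 1 :: real^'n^'n) l) = CARD('n) / (1 + l)"
  by (simp add: resolv_mat_1 trace_mat divide_inverse)

lemma lam_eff_mat_1:
  assumes "0 < k" "k < CARD('n)"
  shows "lam_eff (mat 1 :: real^'n^'n) k = CARD('n) / k - 1"
  unfolding lam_eff_def
proof (rule the_equality)
  have "1 < CARD('n) / k" using assms by (simp add: field_simps)
  then show "0 < CARD('n) / k - 1
      \<and> trace ((mat 1 :: real^'n^'n) ** resolv (mat 1) (CARD('n) / k - 1)) = k"
    using assms by (simp add: trace_resolv_mat_1)
next
  fix l assume "0 < l \<and> trace ((mat 1 :: real^'n^'n) ** resolv (mat 1) l) = k"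
  then have "0 < l" and "trace (resolv (mat 1 :: real^'n^'n) l) = k"
    by simp_all
  then have "0 < l" and "CARD('n) / (1 + l) = k"
    by (simp_all add: trace_resolv_mat_1)
  then show "l = CARD('n) / k - 1"
    using assms by (simp add: field_simps)
qed

lemma resolv_lam_eff_mat_1:
  assumes "0 < k" "k < CARD('n)"
  shows "resolv (mat 1) (lam_eff (mat 1 :: real^'n^'n) k) = mat (k / CARD('n))"
proof -
  have one_plus: "1 + lam_eff (mat 1 :: real^'n^'n) k = CARD('n) / k"
    using assms by (simp add: lam_eff_mat_1)
  then have "1 + lam_eff (mat 1 :: real^'n^'n) k \<noteq> 0"
    using assms by simp
  then have "resolv (mat 1) (lam_eff (mat 1 :: real^'n^'n) k)
      = mat (inverse (1 + lam_eff (mat 1 :: real^'n^'n) k))"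
    by (rule resolv_mat_1)
  then show ?thesis unfolding one_plus by simp
qed

lemma df2_lam_eff_mat_1:
  assumes "0 < k" "k < CARD('n)"
  shows "df2 (mat 1 :: real^'n^'n) (lam_eff (mat 1 :: real^'n^'n) k) = k\<^sup>2 / CARD('n)"
  using assms by (simp add: df2_def resolv_lam_eff_mat_1 mat_mult_mat trace_mat power2_eq_square)

lemma isotropic_overparameterized_closed_forms:
  fixes th :: "real^'m"
  defines "M \<equiv> real CARD('m)" and "t \<equiv> (norm th)\<^sup>2"
  assumes "0 < n" "n < CARD('m)" "n < p"
  shows "BN0 (mat 1) th n p = real p * n * t / (M * (real p - n))"
    and "VN0 (mat 1 :: real^'m^'m) s2 n p = s2 * real p * n / ((M - n) * (real p - n))"
    and "BR0 (mat 1) th n p = (M - n) * real p * t / (M * (real p - n))"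
    and "VR0 (mat 1 :: real^'m^'m) s2 n p = s2 * n / (M - n) + s2 * n / (real p - n)"
proof -
  have lam: "lam_eff (mat 1 :: real^'m^'m) n = (M - n) / n"
    using assms(3,4) by (simp add: lam_eff_mat_1 M_def field_simps)
  have res: "resolv (mat 1) (lam_eff (mat 1 :: real^'m^'m) n) = mat (n / M)"
    using assms(3,4) by (simp add: resolv_lam_eff_mat_1 M_def)
  have df: "real n - df2 (mat 1 :: real^'m^'m) (lam_eff (mat 1 :: real^'m^'m) n) = n * (M - n) / M"
    using assms(3,4) by (simp add: df2_lam_eff_mat_1 M_def field_simps power2_eq_square)
  have "real n < M" "real n < p" "0 < real n" using assms(3-5) by (simp_all add: M_def)
  then have ne: "M \<noteq> 0" "M - n \<noteq> 0" "real p - n \<noteq> 0" "real n \<noteq> 0" by auto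
  show "BN0 (mat 1) th n p = real p * n * t / (M * (real p - n))"
    using assms(5) ne by (simp add: BN0_def res inner_mat_vector_mult t_def)
  show "VN0 (mat 1 :: real^'m^'m) s2 n p = s2 * real p * n / ((M - n) * (real p - n))"
    using assms(5) ne by (simp add: VN0_def lam)
  have "BR0 (mat 1) th n p
      = n * (lam_eff (mat 1 :: real^'m^'m) n)\<^sup>2 * (n / M * (n / M) * t) / (n * (M - n) / M)
      + n * lam_eff (mat 1 :: real^'m^'m) n * (n / M * t) / (real p - n)"
    using assms(5) by (simp add: BR0_def Let_def res df mat_mult_mat inner_mat_vector_mult t_def)
  also have "\<dots> = (M - n) * t / M + n * (M - n) * t / (M * (real p - n))"
    using ne by (simp add: lam power2_eq_square)
  also have "\<dots> = (M - n) * real p * t / (M * (real p - n))"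
    using ne by (simp add: field_simps)
  finally show "BR0 (mat 1) th n p = (M - n) * real p * t / (M * (real p - n))" .
  have "VR0 (mat 1 :: real^'m^'m) s2 n p
      = s2 * (n\<^sup>2 / M) / (n * (M - n) / M) + s2 * n / (real p - n)"
    using assms(3-5) df by (simp add: VR0_def df2_lam_eff_mat_1 M_def)
  moreover have "s2 * (n\<^sup>2 / M) / (n * (M - n) / M) = s2 * n / (M - n)"
    using ne by (simp add: field_simps power2_eq_square)
  ultimately show "VR0 (mat 1 :: real^'m^'m) s2 n p = s2 * n / (M - n) + s2 * n / (real p - n)"
    by simp
qed

lemma isotropic_underparameterized_closed_forms:
  fixes th :: "real^'m"
  defines "M \<equiv> real CARD('m)" and "t \<equiv> (norm th)\<^sup>2"
  assumes "0 < p" "p < n" "n < CARD('m)"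
  shows "BN0 (mat 1) th n p
      = real p ^ 3 * t / (M * (n * M - real p ^ 2)) + real p ^ 2 * t / (M * (n - real p))"
    and "VN0 (mat 1 :: real^'m^'m) s2 n p = s2 * real p ^ 2 / ((M - p) * (n - real p))"
    and "BR0 (mat 1) th n p = n * (M - p) * t / (M * (n - real p))"
    and "VR0 (mat 1 :: real^'m^'m) s2 n p = s2 * p / (n - real p)"
proof -
  have p_lt_M: "p < CARD('m)" using assms(4,5) by simp
  have lam: "lam_eff (mat 1 :: real^'m^'m) p = (M - p) / p"
    using assms(3) p_lt_M by (simp add: lam_eff_mat_1 M_def field_simps)
  have res: "resolv (mat 1) (lam_eff (mat 1 :: real^'m^'m) p) = mat (p / M)"
    using assms(3) p_lt_M by (simp add: resolv_lam_eff_mat_1 M_def)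
  have "real p < n" "real n < M" "0 < real p" using assms(3-5) by (simp_all add: M_def)
  moreover from this have "real p * p < n * M" by (intro mult_strict_mono) auto
  ultimately have ne:
      "M \<noteq> 0" "M - p \<noteq> 0" "n - real p \<noteq> 0" "real p \<noteq> 0" "n * M - real p ^ 2 \<noteq> 0"
    by (auto simp: power2_eq_square)
  have df: "real n - df2 (mat 1 :: real^'m^'m) (lam_eff (mat 1 :: real^'m^'m) p)
      = (n * M - real p ^ 2) / M"
    using assms(3) p_lt_M ne by (simp add: df2_lam_eff_mat_1 M_def field_simps)
  have "BN0 (mat 1) th n p = p * (p / M * (p / M) * t) / ((n * M - real p ^ 2) / M)
      + p * (p / M * t) / (n - real p)"
    using assms(4) by (simp add: BN0_def Let_def res df mat_mult_mat inner_mat_vector_mult t_def)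
  also have "\<dots>
      = real p ^ 3 * t / (M * (n * M - real p ^ 2)) + real p ^ 2 * t / (M * (n - real p))"
    using ne by (simp add: field_simps power2_eq_square power3_eq_cube)
  finally show "BN0 (mat 1) th n p
      = real p ^ 3 * t / (M * (n * M - real p ^ 2)) + real p ^ 2 * t / (M * (n - real p))" .
  show "VN0 (mat 1 :: real^'m^'m) s2 n p = s2 * real p ^ 2 / ((M - p) * (n - real p))"
    using assms(4) ne by (simp add: VN0_def lam field_simps power2_eq_square)
  have "BR0 (mat 1) th n p = n * lam_eff (mat 1 :: real^'m^'m) p * (p / M * t) / (n - real p)"
    using assms(4) by (simp add: BR0_def Let_def res inner_mat_vector_mult t_def)
  also have "\<dots> = n * (M - p) * t / (M * (n - real p))"
    using ne by (simp add: lam field_simps)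
  finally show "BR0 (mat 1) th n p = n * (M - p) * t / (M * (n - real p))" .
  show "VR0 (mat 1 :: real^'m^'m) s2 n p = s2 * p / (n - real p)"
    using assms(4) by (simp add: VR0_def)
qed

lemma overparameterized_risk_norm_relation:
  fixes M n p s t :: real
  assumes "0 < n" "n < M" "n < p"
    and bn: "bn = p * n * t / (M * (p - n))"
    and vn: "vn = s * p * n / ((M - n) * (p - n))"
    and br: "br = (M - n) * p * t / (M * (p - n))"
    and vr: "vr = s * n / (M - n) + s * n / (p - n)"
  shows "br + vr = (M - n) / n * (bn + vn) + (2 * n - M) / (M - n) * s"
proof -
  \<comment> \<open>shifting by \<open>n\<close> makes every denominator a product of atoms, which \<open>field_simps\<close> can clear\<close>
  define a q where "a = M - n" and "q = p - n"
  then have M: "M = n + a" and p: "p = n + q" by simp_all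
  have "n \<noteq> 0" "n + a \<noteq> 0" "a \<noteq> 0" "q \<noteq> 0"
    using assms(1-3) by (simp_all add: a_def q_def)
  then show ?thesis
    unfolding bn vn br vr M p by (simp add: field_simps)
qed

lemma underparameterized_variance_relation:
  fixes M n p s :: real
  assumes "0 < p" "p < n" "n < M"
    and vn: "vn = s * p\<^sup>2 / ((M - p) * (n - p))"
    and vr: "vr = s * p / (n - p)"
  shows "vr\<^sup>2 = (M - n) / n * vr * vn + M * s / n * vn"
proof -
  have ne: "p \<noteq> 0" "n \<noteq> 0" "M - p \<noteq> 0" "n - p \<noteq> 0" using assms(1-3) by auto
  have coeff: "(M - n) / n * vr + M * s / n = vr * (M - p) / p"
    using ne by (simp add: vr field_simps)
  have vn_vr: "vn = vr * p / (M - p)"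
    using ne by (simp add: vn vr field_simps power2_eq_square)
  have "(M - n) / n * vr * vn + M * s / n * vn = ((M - n) / n * vr + M * s / n) * vn"
    by (simp add: distrib_right)
  also have "\<dots> = vr * (M - p) / p * (vr * p / (M - p))"
    by (simp only: coeff vn_vr)
  also have "\<dots> = vr\<^sup>2"
    using ne by (simp add: power2_eq_square)
  finally show ?thesis ..
qed

lemma underparameterized_bias_relation:
  fixes M n p t :: real
  assumes "0 < p" "p < n" "n < M"
    and bn: "bn = p ^ 3 * t / (M * (n * M - p\<^sup>2)) + p\<^sup>2 * t / (M * (n - p))"
    and br: "br = n * (M - p) * t / (M * (n - p))"
  shows "(M - n) * bn * (M * br - n * t) * (M * br\<^sup>2 - n * t\<^sup>2)
       = n * M * (br - t)\<^sup>2 * (M * br\<^sup>2 + n * t * br - 2 * n * t\<^sup>2)"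
proof -
  define D where "D = n - p"
  define E where "E = n * M - p\<^sup>2"
  define C where "C = n * M + n * p - 2 * p\<^sup>2"
  have "p * p < n * M" using assms(1-3) by (intro mult_strict_mono) auto
  then have ne: "D \<noteq> 0" "E \<noteq> 0" "M \<noteq> 0"
    using assms(1-3) by (auto simp: D_def E_def power2_eq_square)
  have bn': "bn = t * (p\<^sup>2 * C / (M * E * D))"
    using ne unfolding bn D_def[symmetric] E_def[symmetric]
    by (simp add: field_simps power2_eq_square power3_eq_cube)
      (simp add: C_def D_def E_def algebra_simps power2_eq_square)
  have br': "br = t * (n * (M - p) / (M * D))"
    by (simp add: br D_def)
  have risk_minus_norm: "M * br - n * t = t * (n * (M - n) / D)"
    using ne by (simp add: br' field_simps) (simp add: D_def algebra_simps)
  have risk_sq_minus_norm_sq: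
      "M * br\<^sup>2 - n * t\<^sup>2 = t\<^sup>2 * (n * (M - n) * E / (M * D\<^sup>2))"
    using ne by (simp add: br' field_simps power2_eq_square)
      (simp add: D_def E_def algebra_simps power2_eq_square)
  have risk_excess: "br - t = t * (p * (M - n) / (M * D))"
    using ne by (simp add: br' field_simps) (simp add: D_def algebra_simps)
  have quadratic_in_risk:
      "M * br\<^sup>2 + n * t * br - 2 * n * t\<^sup>2 = t\<^sup>2 * (n * (M - n) * C / (M * D\<^sup>2))"
    using ne by (simp add: br' field_simps power2_eq_square)
      (simp add: C_def D_def algebra_simps power2_eq_square)
  have "(M - n) * bn * (M * br - n * t) * (M * br\<^sup>2 - n * t\<^sup>2)
      = (M - n) * (t * (p\<^sup>2 * C / (M * E * D))) * (t * (n * (M - n) / D))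
          * (t\<^sup>2 * (n * (M - n) * E / (M * D\<^sup>2)))"
    by (simp only: bn' risk_minus_norm risk_sq_minus_norm_sq)
  also have "\<dots> = t ^ 4 * p\<^sup>2 * n\<^sup>2 * (M - n) ^ 3 * C / (M\<^sup>2 * D ^ 4)"
    using ne by (simp add: field_simps power2_eq_square power3_eq_cube power4_eq_xxxx)
  also have "\<dots>
      = n * M * (t * (p * (M - n) / (M * D)))\<^sup>2 * (t\<^sup>2 * (n * (M - n) * C / (M * D\<^sup>2)))"
    using ne by (simp add: field_simps power2_eq_square power3_eq_cube power4_eq_xxxx)
  also have "\<dots> = n * M * (br - t)\<^sup>2 * (M * br\<^sup>2 + n * t * br - 2 * n * t\<^sup>2)"
    by (simp only: risk_excess quadratic_in_risk)
  finally show ?thesis .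
qed

theorem corollary7:
  fixes th :: "real^'m" and s2 :: real and n p :: nat
  defines "L \<equiv> (mat 1 :: real^'m^'m)"
  defines "m \<equiv> CARD('m)"
  assumes "m > n" and "n > 0" and "p > 0" and "s2 \<ge> 0"
  shows "(p > n \<longrightarrow>
            R0 L th s2 n p = (real m - real n) / real n * N0 L th s2 n p
                             + (2 * real n - real m) / (real m - real n) * s2)
       \<and> (p < n \<longrightarrow>
            (VR0 L s2 n p)^2 = (real m - real n) / real n * VR0 L s2 n p * VN0 L s2 n p
                               + real m * s2 / real n * VN0 L s2 n p
          \<and> (real m - real n) * BN0 L th n p * (real m * BR0 L th n p - real n * (norm th)^2)
               * (real m * (BR0 L th n p)^2 - real n * (norm th)^4)
            = real n * real m * (BR0 L th n p - (norm th)^2)^2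
               * (real m * (BR0 L th n p)^2 + real n * (norm th)^2 * BR0 L th n p
                  - 2 * real n * (norm th)^4))"
proof -
  have n_lt_m: "n < CARD('m)" using assms(3) by (simp add: m_def)
  have norm_pow4: "(norm th)^4 = ((norm th)\<^sup>2)\<^sup>2" by simp
  show ?thesis
    unfolding L_def m_def norm_pow4
  proof (intro conjI impI, goal_cases overparameterized variance bias)
    case overparameterized
    note closed_forms = isotropic_overparameterized_closed_forms[OF \<open>0 < n\<close> n_lt_m this]
    show ?case
      unfolding R0_def N0_def
      by (rule overparameterized_risk_norm_relation[OF _ _ _ closed_forms])
        (use \<open>0 < n\<close> n_lt_m \<open>n < p\<close> in simp_all)
  next
    case variance
    note closed_forms = isotropic_underparameterized_closed_forms[OF \<open>0 < p\<close> this n_lt_m]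
    show ?case
      by (rule underparameterized_variance_relation[OF _ _ _ closed_forms(2,4)])
        (use \<open>0 < p\<close> n_lt_m \<open>p < n\<close> in simp_all)
  next
    case bias
    note closed_forms = isotropic_underparameterized_closed_forms[OF \<open>0 < p\<close> this n_lt_m]
    show ?case
      by (rule underparameterized_bias_relation[OF _ _ _ closed_forms(1,3)])
        (use \<open>0 < p\<close> n_lt_m \<open>p < n\<close> in simp_all)
  qed
qed

end
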